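(* Every $L\in\mathcal L(C_6)$ which is an arithmetical multiprogression with difference $4$ and period $\{0,3,4\}$ lies in $\mathcal L(C_2^5)$.
   Context: $C_n$ denotes a cyclic group of order $n$ and $C_2^r$ an elementary abelian $2$-group of rank $r$; $[a,b]=\{x\in\mathbb Z:a\le x\le b\}$. For a subset $G_0$ of a finite abelian group $G$, a sequence over $G_0$ is an element of the free abelian monoid $\mathcal F(G_0)$ with basis $G_0$ (a finite unordered list of elements of $G_0$, repetitions allowed). $\mathcal B(G_0)$ is the monoid of zero-sum sequences over $G_0$ (including the empty sequence). An atom is a minimal zero-sum sequence, i.e. a nonempty zero-sum sequence that is not a product of two nonempty zero-sum sequences. For $B\in\mathcal B(G_0)$, $\mathsf L(B)=\{k\in\mathbb N_0: B \text{ is a product of } k \text{ atoms}\}$, and $\mathcal L(G_0)=\{\mathsf L(B):B\in\mathcal B(G_0)\}$; $\mathcal L(G)$ is the case $G_0=G$. Arithmetical multiprogression (AMP): for $d\in\mathbb N$ and $\{0,d\}\subset\mathcal D\subset[0,d]$, a set $L\subset\mathbb Z$ is an AMP with difference $d$ and period $\mathcal D$ if $L$ is finite, nonempty, and $L=(\min L+\mathcal D+d\mathbb Z)\cap[\min L,\max L]$. *)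

theory Defs
  imports "HOL-Analysis.Finite_Cartesian_Product" "HOL-Library.Numeral_Type" "HOL-Library.Multiset"
begin

text \<open>Sequences over a subset G0 of an abelian group are finite multisets of elements of G0.\<close>

definition zero_sum :: "'a::comm_monoid_add multiset \<Rightarrow> bool" where
  "zero_sum B \<longleftrightarrow> sum_mset B = 0"

definition atom :: "'a::comm_monoid_add multiset \<Rightarrow> bool" where
  "atom B \<longleftrightarrow> B \<noteq> {#} \<and> zero_sum B \<and>
     \<not> (\<exists>C D. C \<noteq> {#} \<and> D \<noteq> {#} \<and> zero_sum C \<and> zero_sum D \<and> B = C + D)"

definition lengths :: "'a::comm_monoid_add multiset \<Rightarrow> nat set" where
  "lengths B = {k. \<exists>As :: 'a multiset list. length As = k \<and> (\<forall>A\<in>set As. atom A) \<and> sum_list As = B}"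

definition sets_of_lengths :: "'a::comm_monoid_add set \<Rightarrow> nat set set" where
  "sets_of_lengths G0 = {lengths B | B. set_mset B \<subseteq> G0 \<and> zero_sum B}"

definition is_AMP :: "int set \<Rightarrow> int \<Rightarrow> int set \<Rightarrow> bool" where
  "is_AMP L d D \<longleftrightarrow> d > 0 \<and> {0, d} \<subseteq> D \<and> D \<subseteq> {0..d} \<and> finite L \<and> L \<noteq> {} \<and>
     L = {x. \<exists>y\<in>D. \<exists>k::int. x = Min L + y + d * k} \<inter> {Min L..Max L}"

text \<open>C_6 is the numeral type 6 (integers mod 6); C_2^5 is the type 2^5 (vectors of length 5 over Z/2).\<close>

end

theory Submission
  imports Defs
begin

text \<open>
Over \<open>C\<^sub>6\<close> every atom \<open>A\<close> satisfies \<open>|A| + 5 v\<^sub>0(A) \<le> 6\<close> and \<open>|A| + v\<^sub>0(A) \<ge> 2\<close>, so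
\<open>max L \<le> 3 min L\<close>. In the extremal case the shortest factorization consists of atoms \<open>g\<^sup>6\<close>
with \<open>g\<close> a generator, so \<open>B\<close> lives on \<open>{1, 5}\<close>, where every atom has length 2 or 6;
hence all lengths have the parity of \<open>min L\<close> and \<open>min L + 3 \<notin> L\<close>.
For an AMP with difference 4 and period \<open>{0, 3, 4}\<close> this leaves \<open>max L - min L < 2 min L\<close>
(or \<open>L = {0}\<close>), and every such set is realized over \<open>C\<^sub>2\<^sup>5\<close> by
\<open>0\<^sup>z (e\<^sub>0 e\<^sub>1)\<^sup>i (e\<^sub>0 + e\<^sub>1) (e\<^sub>2 e\<^sub>3 e\<^sub>4 s)\<^sup>i\<^sup>+\<^sup>1\<close> with \<open>s = e\<^sub>0 + \<dots> + e\<^sub>4\<close>.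
Its atoms are \<open>0\<close>, the pairs \<open>g\<^sup>2\<close> and three squarefree atoms \<open>U, R, W\<close>; every factorization
contains exactly one of \<open>R, W\<close>, and counting multiplicities modulo 2 yields the lengths.
\<close>

section \<open>Atoms and sets of lengths\<close>

lemma atom_not_empty: "atom A \<Longrightarrow> A \<noteq> {#}"
  by (simp add: atom_def)

lemma atom_sum_zero: "atom A \<Longrightarrow> sum_mset A = 0"
  by (simp add: atom_def zero_sum_def)

lemma atom_eq_if_zero_sum_submset:
  fixes A :: "'a::cancel_comm_monoid_add multiset"
  assumes "atom A" "C \<subseteq># A" "C \<noteq> {#}" "sum_mset C = 0"
  shows "C = A"
proof (rule ccontr)
  assume "C \<noteq> A"
  have A: "A = C + (A - C)" using assms(2) by simp
  with \<open>C \<noteq> A\<close> have "A - C \<noteq> {#}" by auto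
  moreover have "sum_mset (A - C) = 0"
    using A assms(1,4) by (metis add_0 atom_sum_zero sum_mset.union)
  ultimately show False
    using assms A unfolding atom_def zero_sum_def by blast
qed

lemma atomI:
  fixes A :: "'a::comm_monoid_add multiset"
  assumes "A \<noteq> {#}" "sum_mset A = 0"
    and "\<And>C. C \<subseteq># A \<Longrightarrow> C \<noteq> {#} \<Longrightarrow> sum_mset C = 0 \<Longrightarrow> C = A"
  shows "atom A"
  unfolding atom_def zero_sum_def
  using assms by (metis add_cancel_right_right mset_subset_eq_add_left)

lemma sum_proper_submset_of_atom_nonzero:
  fixes A :: "'a::cancel_comm_monoid_add multiset"
  assumes "atom A" "C \<subseteq># A" "C \<noteq> {#}" "size C < size A"
  shows "sum_mset C \<noteq> 0"
  using atom_eq_if_zero_sum_submset[OF assms(1-3)] assms(4) by auto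

lemma atom_singleton_iff: "atom {#a#} \<longleftrightarrow> a = 0"
proof
  assume "a = 0"
  have False if "C \<noteq> {#}" "D \<noteq> {#}" "{#a#} = C + D" for C D :: "'a multiset"
  proof -
    have "size (C + D) = 1" by (metis that(3) size_single)
    then have "size C + size D = 1" "size C \<noteq> 0" "size D \<noteq> 0"
      using that(1,2) by auto
    then show False by linarith
  qed
  then show "atom {#a#}" using \<open>a = 0\<close> unfolding atom_def zero_sum_def by auto
qed (simp add: atom_def zero_sum_def)

lemma atom_containing_zero:
  fixes A :: "'a::cancel_comm_monoid_add multiset"
  shows "atom A \<Longrightarrow> 0 \<in># A \<Longrightarrow> A = {#0#}"
  by (metis atom_eq_if_zero_sum_submset empty_not_add_mset single_subset_iff sum_mset.singleton)

lemma atom_size_ge_two: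
  fixes A :: "'a::cancel_comm_monoid_add multiset"
  assumes "atom A" "0 \<notin># A"
  shows "2 \<le> size A"
proof -
  have "size A \<noteq> 1"
    using assms by (metis atom_singleton_iff size_1_singleton_mset union_single_eq_member)
  moreover have "size A \<noteq> 0" using atom_not_empty[OF assms(1)] by simp
  ultimately show ?thesis by linarith
qed

lemma atom_pair:
  fixes a b :: "'a::cancel_comm_monoid_add"
  assumes "a + b = 0" "a \<noteq> 0"
  shows "atom {#a, b#}"
  unfolding atom_def zero_sum_def
proof (intro conjI notI)
  show "sum_mset {#a, b#} = 0" using assms(1) by simp
  assume "\<exists>C D. C \<noteq> {#} \<and> D \<noteq> {#} \<and> sum_mset C = 0 \<and> sum_mset D = 0 \<and> {#a, b#} = C + D"
  then obtain C D where CD: "C \<noteq> {#}" "D \<noteq> {#}" "sum_mset C = 0" "{#a, b#} = C + D"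
    by blast
  have "size C + size D = 2" "size C \<noteq> 0" "size D \<noteq> 0"
    using CD(1,2) arg_cong[OF CD(4), of size] by auto
  then have "size C = 1" by linarith
  then obtain c where "C = {#c#}" by (metis size_1_singleton_mset)
  moreover have "b \<noteq> 0" using assms by auto
  ultimately show False using CD assms(2) by (auto simp: add_eq_conv_ex)
qed simp

lemma count_sum_list: "count (sum_list As) x = (\<Sum>A\<leftarrow>As. count A x)"
  by (induct As) auto

lemma size_sum_list: "size (sum_list As) = (\<Sum>A\<leftarrow>As. size (A :: 'a multiset))"
  by (induct As) auto

lemma mset_subset_eq_sum_list: "A \<in> set As \<Longrightarrow> A \<subseteq># sum_list As"
  by (induct As) (auto intro: subset_mset.order_trans)

lemma sum_mset_of_lengths:
  assumes "k \<in> lengths B"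
  shows "sum_mset B = 0"
proof -
  have "sum_mset (sum_list As) = 0" if "\<forall>A\<in>set As. atom A" for As :: "'a multiset list"
    using that by (induct As) (auto simp: atom_sum_zero)
  then show ?thesis using assms unfolding lengths_def by blast
qed

lemma lengths_empty: "lengths ({#} :: 'a::comm_monoid_add multiset) = {0}"
proof -
  have "As = []" if "\<forall>A\<in>set As. atom A" "sum_list As = ({#} :: 'a multiset)" for As
    using that atom_not_empty mset_subset_eq_sum_list by (cases As) fastforce+
  then show ?thesis unfolding lengths_def by force
qed

section \<open>Atoms over finite abelian groups\<close>

lemma mset_take_drop_subset_eq: "mset (take n (drop i xs)) \<subseteq># mset xs"
  by (metis append_take_drop_id mset_append mset_subset_eq_add_left mset_subset_eq_add_right
      subset_mset.order_trans)

lemma inj_on_prefix_sums: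
  fixes xs :: "'a::cancel_comm_monoid_add list"
  assumes "\<And>i n. 0 < n \<Longrightarrow> i + n \<le> length xs \<Longrightarrow> sum_list (take n (drop i xs)) \<noteq> 0"
  shows "inj_on (\<lambda>i. c + sum_list (take i xs)) {..length xs}"
proof (rule linorder_inj_onI')
  fix i j assume "i \<in> {..length xs}" "j \<in> {..length xs}" "i < j"
  then have "sum_list (take (j - i) (drop i xs)) \<noteq> 0" by (intro assms) auto
  moreover have "take j xs = take i xs @ take (j - i) (drop i xs)"
    using \<open>i < j\<close> by (metis le_add_diff_inverse less_imp_le take_add)
  ultimately show "c + sum_list (take i xs) \<noteq> c + sum_list (take j xs)"
    by (simp add: add.assoc)
qed

lemma zero_sum_submset_exists:
  fixes X :: "'a::{finite, cancel_comm_monoid_add} multiset"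
  assumes "CARD('a) \<le> size X"
  shows "\<exists>C. C \<subseteq># X \<and> C \<noteq> {#} \<and> sum_mset C = 0"
proof (rule ccontr)
  assume none: "\<nexists>C. C \<subseteq># X \<and> C \<noteq> {#} \<and> sum_mset C = 0"
  obtain xs where xs: "mset xs = X" using ex_mset by blast
  have "inj_on (\<lambda>i. 0 + sum_list (take i xs)) {..length xs}"
  proof (rule inj_on_prefix_sums)
    fix i n assume "0 < n" "i + n \<le> length xs"
    then show "sum_list (take n (drop i xs)) \<noteq> 0"
      using none mset_take_drop_subset_eq[of n i xs] by (auto simp: xs sum_mset_sum_list[symmetric])
  qed
  then have "card {..length xs} \<le> CARD('a)" by (rule card_inj_on_le) auto
  then show False using assms xs by auto
qed

lemma atom_size_le_card:
  fixes A :: "'a::{finite, cancel_comm_monoid_add} multiset"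
  assumes "atom A"
  shows "size A \<le> CARD('a)"
proof (rule ccontr)
  assume "\<not> size A \<le> CARD('a)"
  then obtain x where x: "x \<in># A" by (metis multiset_nonemptyE size_empty le0)
  then have "CARD('a) \<le> size (A - {#x#})"
    using \<open>\<not> size A \<le> CARD('a)\<close> by (simp add: size_Diff_submset)
  then obtain C where C: "C \<subseteq># A - {#x#}" "C \<noteq> {#}" "sum_mset C = 0"
    using zero_sum_submset_exists by blast
  have "size C < size A"
    using C(1) x by (metis size_Diff1_less size_mset_mono le_less_trans)
  moreover have "C \<subseteq># A" using C(1) by (meson diff_subset_eq_self subset_mset.order_trans)
  ultimately show False using sum_proper_submset_of_atom_nonzero[OF assms] C(2,3) by blast
qed

text \<open>The prefix sums of the rest of A, shifted by a + b, are distinct and avoid 0, a and b;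
  together with a they exhaust the nonzero elements, which forces b = a.\<close>
lemma atom_of_size_card_pair_eq:
  fixes A :: "'a::{finite, cancel_comm_monoid_add} multiset"
  assumes atom: "atom A" and size: "size A = CARD('a)" and ab: "{#a, b#} \<subseteq># A"
  shows "a = b"
proof -
  obtain rs where rs: "mset rs = A - {#a, b#}" using ex_mset by blast
  have A: "A = {#a, b#} + mset rs" using ab rs by (metis subset_mset.add_diff_inverse)
  have len: "length rs + 2 = CARD('a)" using arg_cong[OF A, of size] size by simp
  have nonzero: "sum_mset C \<noteq> 0" if "C \<subseteq># A" "C \<noteq> {#}" "size C < CARD('a)" for C
    using sum_proper_submset_of_atom_nonzero[OF atom that(1,2)] that(3) size by simp
  define q where "q i = a + b + sum_list (take i rs)" for i
  have prefix: "C + mset (take i rs) \<subseteq># A" if "C \<subseteq># {#a, b#}" for C i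
    using subset_mset.add_mono[OF that mset_take_drop_subset_eq[of i 0 rs]] by (simp add: A)
  have "inj_on q {..length rs}"
    unfolding q_def
  proof (rule inj_on_prefix_sums)
    fix i n assume "0 < n" "i + n \<le> length rs"
    moreover have "mset (take n (drop i rs)) \<subseteq># A"
      using mset_take_drop_subset_eq[of n i rs] by (simp add: A subset_mset.order_trans)
    ultimately show "sum_list (take n (drop i rs)) \<noteq> 0"
      using nonzero[of "mset (take n (drop i rs))"] len by (simp add: sum_mset_sum_list)
  qed
  then have inj: "inj_on q {..<length rs}" by (rule inj_on_subset) auto
  have q_ne: "q i \<noteq> 0" "q i \<noteq> a" "q i \<noteq> b" if "i < length rs" for i
  proof -
    have "min (length rs) i = i" "i + 2 < CARD('a)" using that len by simp_all
    then have "a + b + sum_list (take i rs) \<noteq> 0" "b + sum_list (take i rs) \<noteq> 0"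
        "a + sum_list (take i rs) \<noteq> 0"
      using nonzero[OF prefix[of "{#a, b#}" i]] nonzero[OF prefix[of "{#b#}" i]]
        nonzero[OF prefix[of "{#a#}" i]] by (simp_all add: sum_mset_sum_list add.assoc)
    then show "q i \<noteq> 0" "q i \<noteq> a" "q i \<noteq> b"
      unfolding q_def by (simp_all add: add.assoc) (metis add.left_commute add_cancel_left_right)
  qed
  have a_ne: "a \<noteq> 0" and b_ne: "b \<noteq> 0"
    using nonzero[OF prefix[of "{#a#}" 0]] nonzero[OF prefix[of "{#b#}" 0]] len by auto
  let ?Q = "insert a (q ` {..<length rs})"
  have "card ?Q = CARD('a) - 1"
    using q_ne(2) card_image[OF inj] len by (auto simp: card_insert_if)
  moreover have "?Q \<subseteq> UNIV - {0}" using q_ne(1) a_ne by auto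
  ultimately have "?Q = UNIV - {0}"
    by (intro card_subset_eq) (auto simp: card_Diff_singleton)
  then have "b \<in> ?Q" using b_ne by blast
  then show "a = b" using q_ne(3) by auto
qed

lemma atom_of_size_card_eq_replicate:
  fixes A :: "'a::{finite, cancel_comm_monoid_add} multiset"
  assumes "atom A" "size A = CARD('a)"
  obtains g where "A = replicate_mset CARD('a) g"
proof -
  obtain g where g: "g \<in># A" using atom_not_empty[OF assms(1)] by blast
  have "x = g" if "x \<in># A" for x
  proof (rule ccontr)
    assume "x \<noteq> g"
    then have "{#g, x#} \<subseteq># A" using g that by (simp add: insert_subset_eq_iff in_diff_count)
    then show False using atom_of_size_card_pair_eq[OF assms] \<open>x \<noteq> g\<close> by blast
  qed
  then have "A = replicate_mset (size A) g" by (intro set_mset_subset_singletonD) auto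
  then show thesis using that assms(2) by simp
qed

lemma atom_size_count_zero_bounds:
  fixes A :: "'a::{finite, cancel_comm_monoid_add} multiset"
  assumes "atom A"
  shows "size A + (CARD('a) - 1) * count A 0 \<le> CARD('a)" "2 \<le> size A + count A 0"
proof -
  have "A = {#0#} \<or> count A 0 = 0 \<and> 2 \<le> size A \<and> size A \<le> CARD('a)"
    using assms atom_containing_zero atom_size_ge_two atom_size_le_card by (metis not_in_iff)
  then show "size A + (CARD('a) - 1) * count A 0 \<le> CARD('a)" "2 \<le> size A + count A 0"
    by auto
qed

lemma lengths_size_bounds:
  fixes B :: "'a::{finite, cancel_comm_monoid_add} multiset"
  assumes "k \<in> lengths B"
  shows "size B + (CARD('a) - 1) * count B 0 \<le> CARD('a) * k" "2 * k \<le> size B + count B 0"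
proof -
  obtain As where As: "length As = k" "\<forall>A\<in>set As. atom A" "sum_list As = B"
    using assms by (auto simp: lengths_def)
  have "size B + (CARD('a) - 1) * count B 0 = (\<Sum>A\<leftarrow>As. size A + (CARD('a) - 1) * count A 0)"
    using As(3) by (auto simp: count_sum_list size_sum_list sum_list_addf sum_list_const_mult)
  also have "\<dots> \<le> (\<Sum>A\<leftarrow>As. CARD('a))"
    using As(2) atom_size_count_zero_bounds(1) by (blast intro: sum_list_mono)
  finally show "size B + (CARD('a) - 1) * count B 0 \<le> CARD('a) * k"
    using As(1) by (simp add: sum_list_triv mult.commute)
  have "2 * k = (\<Sum>A\<leftarrow>As. 2)" using As(1) by (simp add: sum_list_triv)
  also have "\<dots> \<le> (\<Sum>A\<leftarrow>As. size A + count A 0)"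
    using As(2) atom_size_count_zero_bounds(2) by (blast intro: sum_list_mono)
  also have "\<dots> = size B + count B 0"
    using As(3) by (auto simp: count_sum_list size_sum_list sum_list_addf)
  finally show "2 * k \<le> size B + count B 0" .
qed

section \<open>The cyclic group of order 6\<close>

lemma exhaust_6: "(x::6) = 0 \<or> x = 1 \<or> x = 2 \<or> x = 3 \<or> x = 4 \<or> x = 5"
proof (induct x rule: bit0_induct)
  case (of_int z)
  then have "z = 0 \<or> z = 1 \<or> z = 2 \<or> z = 3 \<or> z = 4 \<or> z = 5" by auto
  then show ?case by auto
qed

lemma lengths_C6_le_three_times:
  fixes B :: "6 multiset"
  assumes "k \<in> lengths B" "k' \<in> lengths B"
  shows "k' \<le> 3 * k"
  using lengths_size_bounds[OF assms(1)] lengths_size_bounds[OF assms(2)] by simp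

lemma atom_C6_size_six_support:
  fixes A :: "6 multiset"
  assumes "atom A" "size A = 6"
  shows "set_mset A \<subseteq> {1, 5}"
proof -
  obtain g where A: "A = replicate_mset 6 g"
    using atom_of_size_card_eq_replicate[of A] assms by auto
  have order: "of_nat n * g \<noteq> 0" if "0 < n" "n < 6" for n
    using sum_proper_submset_of_atom_nonzero[OF assms(1), of "replicate_mset n g"] that
    by (simp add: A subseteq_mset_def)
  have "g \<noteq> 0" "g \<noteq> 2" "g \<noteq> 3" "g \<noteq> 4"
    using order[of 1] order[of 2] order[of 3] by auto
  then show ?thesis using exhaust_6[of g] by (auto simp: A)
qed

lemma atom_C6_support_1_5_size:
  fixes A :: "6 multiset"
  assumes atom: "atom A" and support: "set_mset A \<subseteq> {1, 5}"
  shows "size A = 2 \<or> size A = 6"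
proof (cases "1 \<in># A \<and> 5 \<in># A")
  case True
  then have "{#1, 5#} \<subseteq># A" by (simp add: insert_subset_eq_iff in_diff_count)
  then have "{#1, 5#} = A" using atom_eq_if_zero_sum_submset[OF atom] by simp
  then show ?thesis by auto
next
  case False
  then obtain g where g: "g = 1 \<or> g = 5" "set_mset A \<subseteq> {g}" using support by auto
  have A: "A = replicate_mset (size A) g" using g(2) by (rule set_mset_subset_singletonD)
  have "of_nat (size A) * g = 0" using atom_sum_zero[OF atom] by (subst (asm) A) simp
  moreover have "size A \<in> {1, 2, 3, 4, 5, 6}"
    using atom_not_empty[OF atom] atom_size_le_card[OF atom] by (auto simp: nonempty_has_size)
  ultimately show ?thesis using g(1) by auto
qed

lemma lengths_C6_support_1_5_mod_4:
  fixes B :: "6 multiset"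
  assumes "set_mset B \<subseteq> {1, 5}" "k \<in> lengths B"
  shows "size B mod 4 = 2 * k mod 4"
proof -
  obtain As where As: "length As = k" "\<forall>A\<in>set As. atom A" "sum_list As = B"
    using assms(2) by (auto simp: lengths_def)
  have "size A mod 4 = 2" if "A \<in> set As" for A
  proof -
    have "set_mset A \<subseteq> {1, 5}"
      using assms(1) mset_subset_eq_sum_list[OF that] As(3) by (auto dest: mset_subset_eqD)
    then show ?thesis using atom_C6_support_1_5_size As(2) that by fastforce
  qed
  then have "(\<Sum>A\<leftarrow>As. size A) mod 4 = 2 * length As mod 4"
  proof (induct As)
    case (Cons A As)
    then have "size A mod 4 = 2 mod 4" "(\<Sum>A\<leftarrow>As. size A) mod 4 = (2 * length As) mod 4"
      by simp_all
    then have "(size A + (\<Sum>A\<leftarrow>As. size A)) mod 4 = (2 + 2 * length As) mod 4"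
      by (rule mod_add_cong)
    then show ?case by simp
  qed simp
  then show ?thesis using As(1) by (simp add: As(3)[symmetric] size_sum_list)
qed

text \<open>If 3k is a length then the bounds are tight: B has no zeros and a factorization of
  length k into atoms of size 6, so B is supported on the generators 1 and 5.\<close>
lemma lengths_C6_extremal:
  fixes B :: "6 multiset"
  assumes k: "k \<in> lengths B" and three_k: "3 * k \<in> lengths B"
  shows "k + 3 \<notin> lengths B"
proof
  assume k3: "k + 3 \<in> lengths B"
  have "count B 0 = 0" "size B = 6 * k"
    using lengths_size_bounds[OF k] lengths_size_bounds[OF three_k] by simp_all
  obtain As where As: "length As = k" "\<forall>A\<in>set As. atom A" "sum_list As = B"
    using k by (auto simp: lengths_def)
  have size_six: "size A = 6" if A: "A \<in> set As" for A
  proof (rule ccontr)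
    assume "size A \<noteq> 6"
    then have "size A < 6" using atom_size_le_card[of A] As(2) A by simp
    moreover have "(\<Sum>A'\<leftarrow>remove1 A As. size A') \<le> (\<Sum>A'\<leftarrow>remove1 A As. 6)"
    proof (rule sum_list_mono)
      fix A' assume "A' \<in> set (remove1 A As)"
      then show "size A' \<le> 6" using As(2) atom_size_le_card[of A'] set_remove1_subset by force
    qed
    moreover have "size B = size A + (\<Sum>A'\<leftarrow>remove1 A As. size A')"
      using A As(3) by (auto simp: size_sum_list sum_list_map_remove1)
    moreover have "length (remove1 A As) + 1 = k"
      using length_pos_if_in_set[OF A] A As(1) by (simp add: length_remove1)
    ultimately show False using \<open>size B = 6 * k\<close> by (simp add: sum_list_triv)
  qed
  have "set_mset B \<subseteq> {1, 5}"
  proof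
    fix x assume "x \<in># B"
    then obtain A where "A \<in> set As" "x \<in># A" using As(3) by auto
    then show "x \<in> {1, 5}" using atom_C6_size_six_support[of A] As(2) size_six by blast
  qed
  then have "size B mod 4 = 2 * k mod 4" "size B mod 4 = 2 * (k + 3) mod 4"
    using lengths_C6_support_1_5_mod_4 k k3 by blast+
  then show False by presburger
qed

section \<open>The elementary abelian group of rank 5\<close>

lemma exhaust_5: "(i::5) = 0 \<or> i = 1 \<or> i = 2 \<or> i = 3 \<or> i = 4"
proof (induct i rule: bit1_induct)
  case (of_int z)
  then have "z = 0 \<or> z = 1 \<or> z = 2 \<or> z = 3 \<or> z = 4" by auto
  then show ?case by auto
qed

lemma all_5: "(\<forall>i::5. P i) \<longleftrightarrow> P 0 \<and> P 1 \<and> P 2 \<and> P 3 \<and> P 4"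
proof (intro iffI allI)
  fix i :: 5
  assume "P 0 \<and> P 1 \<and> P 2 \<and> P 3 \<and> P 4"
  then show "P i" using exhaust_5[of i] by auto
qed auto

lemma vec_2_5_eq_iff:
  "(x :: 2^5) = y \<longleftrightarrow> x$0 = y$0 \<and> x$1 = y$1 \<and> x$2 = y$2 \<and> x$3 = y$3 \<and> x$4 = y$4"
  unfolding vec_eq_iff all_5 ..

lemma exhaust_2: "(y::2) = 0 \<or> y = 1"
proof (induct y rule: bit0_induct)
  case (of_int z)
  then have "z = 0 \<or> z = 1" by auto
  then show ?case by auto
qed

lemma vec_2_add_self: "(x :: 2^'n) + x = 0"
proof -
  have "y + y = 0" for y :: 2 using exhaust_2[of y] by auto
  then show ?thesis by (simp add: vec_eq_iff)
qed

definition e :: "5 \<Rightarrow> 2^5" where "e i = axis i 1"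
definition e_sum :: "2^5" where "e_sum = e 0 + e 1 + e 2 + e 3 + e 4"
definition e_01 :: "2^5" where "e_01 = e 0 + e 1"

lemma nth_e [simp]: "e i $ j = (if j = i then 1 else 0)"
  by (simp add: e_def axis_def)

lemma nth_e_sum [simp]: "e_sum $ j = 1"
  using exhaust_5[of j] by (elim disjE) (simp_all add: e_sum_def)

lemma nth_e_01 [simp]: "e_01 $ j = (if j = 0 \<or> j = 1 then 1 else 0)"
  by (simp add: e_01_def)

lemma distinct_vectors:
  "distinct [0, e 0, e 1, e 2, e 3, e 4, e_sum, e_01]"
  "distinct [e_01, e_sum, e 4, e 3, e 2, e 1, e 0, 0]"
  by (simp_all add: vec_2_5_eq_iff)

lemmas vector_neqs [simp] = distinct_vectors[simplified]

definition S_seq :: "(2^5) multiset" where "S_seq = {#e 0, e 1, e 2, e 3, e 4, e_sum, e_01#}"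
definition U_seq :: "(2^5) multiset" where "U_seq = {#e 0, e 1, e 2, e 3, e 4, e_sum#}"
definition R_seq :: "(2^5) multiset" where "R_seq = {#e 0, e 1, e_01#}"
definition W_seq :: "(2^5) multiset" where "W_seq = {#e 2, e 3, e 4, e_sum, e_01#}"

lemma of_bool_add_eq_zero_2:
  "(of_bool a + of_bool b :: 2) = 0 \<longleftrightarrow> a = b"
  "(of_bool a + of_bool b + of_bool c :: 2) = 0 \<longleftrightarrow> a = (b \<noteq> c)"
  by (cases a; cases b; cases c; simp)+

lemma sum_filter_S_seq_eq_zero_iff:
  "sum_mset (filter_mset P S_seq) = 0 \<longleftrightarrow>
    P (e 2) = P e_sum \<and> P (e 3) = P e_sum \<and> P (e 4) = P e_sum \<and>
    P (e 0) = (P e_sum \<noteq> P e_01) \<and> P (e 1) = (P e_sum \<noteq> P e_01)"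
proof -
  have "sum_mset (filter_mset P M) $ k = (\<Sum>x\<in>#M. of_bool (P x) * x $ k)" for M k
    by (induct M) auto
  then show ?thesis
    unfolding vec_2_5_eq_iff by (simp add: S_seq_def of_bool_add_eq_zero_2 ac_simps)
qed

lemma zero_sum_filter_S_seq:
  assumes "sum_mset (filter_mset P S_seq) = 0"
  shows "filter_mset P S_seq \<in> {{#}, U_seq, R_seq, W_seq}"
  using assms unfolding sum_filter_S_seq_eq_zero_iff
  by (cases "P e_sum"; cases "P e_01") (simp_all add: S_seq_def U_seq_def R_seq_def W_seq_def)

lemma count_S_seq_le_1: "count S_seq x \<le> 1"
proof -
  have "S_seq = mset [e 0, e 1, e 2, e 3, e 4, e_sum, e_01]" by (simp add: S_seq_def)
  moreover have "distinct [e 0, e 1, e 2, e 3, e 4, e_sum, e_01]" using distinct_vectors(1) by simp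
  ultimately show ?thesis by (metis distinct_count_atmost_1 le_refl zero_le_one)
qed

lemma squarefree_eq_filter_S_seq:
  assumes "\<And>x. count A x \<le> 1" "set_mset A \<subseteq> set_mset S_seq"
  shows "A = filter_mset (\<lambda>x. x \<in># A) S_seq"
proof (rule multiset_eqI)
  fix x
  show "count A x = count (filter_mset (\<lambda>x. x \<in># A) S_seq) x"
    using assms(1)[of x] assms(2) count_S_seq_le_1[of x]
    by (cases "x \<in># A") (auto simp: le_Suc_eq count_eq_zero_iff)
qed

lemma zero_sum_squarefree_S_seq:
  assumes "\<And>x. count A x \<le> 1" "set_mset A \<subseteq> set_mset S_seq" "sum_mset A = 0"
  shows "A \<in> {{#}, U_seq, R_seq, W_seq}"
proof -
  have A: "A = filter_mset (\<lambda>x. x \<in># A) S_seq" by (rule squarefree_eq_filter_S_seq[OF assms(1,2)])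
  show ?thesis using zero_sum_filter_S_seq[of "\<lambda>x. x \<in># A", folded A] assms(3) .
qed

lemma size_U_R_W [simp]: "size U_seq = 6" "size R_seq = 3" "size W_seq = 5"
  by (simp_all add: U_seq_def R_seq_def W_seq_def)

lemma atom_if_minimal_among_U_R_W:
  assumes X: "X \<in> {U_seq, R_seq, W_seq}"
    and minimal: "\<And>Y. Y \<in> {U_seq, R_seq, W_seq} \<Longrightarrow> Y \<subseteq># X \<Longrightarrow> Y = X"
  shows "atom X"
proof -
  have "X \<subseteq># S_seq"
  proof -
    have "U_seq = filter_mset (\<lambda>x. x \<noteq> e_01) S_seq"
      "R_seq = filter_mset (\<lambda>x. x \<in> {e 0, e 1, e_01}) S_seq"
      "W_seq = filter_mset (\<lambda>x. x \<notin> {e 0, e 1}) S_seq"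
      by (simp_all add: S_seq_def U_seq_def R_seq_def W_seq_def)
    then show ?thesis using X by (metis insertE multiset_filter_subset singletonD)
  qed
  then have squarefree: "count X x \<le> 1" and support: "set_mset X \<subseteq> set_mset S_seq" for x
    using count_S_seq_le_1[of x] by (auto dest: mset_subset_eq_count[of _ _ x] mset_subset_eqD)
  have sum: "sum_mset X = 0"
    using X by (auto simp: U_seq_def R_seq_def W_seq_def vec_2_5_eq_iff)
  show ?thesis
  proof (rule atomI)
    show "X \<noteq> {#}" using X by (auto simp: U_seq_def R_seq_def W_seq_def)
    show "C = X" if "C \<subseteq># X" "C \<noteq> {#}" "sum_mset C = 0" for C
    proof (rule minimal)
      have "count C x \<le> 1" for x
        using squarefree[of x] mset_subset_eq_count[OF that(1)] by (rule order_trans[rotated])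
      moreover have "set_mset C \<subseteq> set_mset S_seq"
        using support mset_subset_eqD[OF that(1)] by blast
      ultimately show "C \<in> {U_seq, R_seq, W_seq}"
        using zero_sum_squarefree_S_seq[of C] that(2,3) by blast
    qed fact
  qed fact
qed

lemma atom_U_seq: "atom U_seq"
proof (rule atom_if_minimal_among_U_R_W)
  have "e_01 \<notin># U_seq" by (simp add: U_seq_def)
  then have "\<not> R_seq \<subseteq># U_seq" "\<not> W_seq \<subseteq># U_seq"
    by (auto simp: R_seq_def W_seq_def dest: mset_subset_eqD)
  then show "Y = U_seq" if "Y \<in> {U_seq, R_seq, W_seq}" "Y \<subseteq># U_seq" for Y
    using that by blast
qed simp

lemma atom_R_seq: "atom R_seq"
proof (rule atom_if_minimal_among_U_R_W)
  show "Y = R_seq" if "Y \<in> {U_seq, R_seq, W_seq}" "Y \<subseteq># R_seq" for Y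
    using that size_mset_mono[OF that(2)] by auto
qed simp

lemma atom_W_seq: "atom W_seq"
proof (rule atom_if_minimal_among_U_R_W)
  have "e 0 \<notin># W_seq" by (simp add: W_seq_def)
  then have "\<not> R_seq \<subseteq># W_seq" by (auto simp: R_seq_def dest: mset_subset_eqD)
  then show "Y = W_seq" if "Y \<in> {U_seq, R_seq, W_seq}" "Y \<subseteq># W_seq" for Y
    using that size_mset_mono[OF that(2)] by auto
qed simp

lemma atom_over_S_seq_cases:
  assumes atom: "atom A" and support: "set_mset A \<subseteq> insert 0 (set_mset S_seq)"
  obtains "A = {#0#}" | g where "g \<noteq> 0" "A = {#g, g#}" | "A = U_seq" | "A = R_seq" | "A = W_seq"
proof (cases "0 \<in># A")
  case True
  then show ?thesis using atom_containing_zero[OF atom] that(1) by blast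
next
  case False
  show ?thesis
  proof (cases "\<exists>g. 2 \<le> count A g")
    case True
    then obtain g where "2 \<le> count A g" by blast
    then have "{#g, g#} \<subseteq># A" by (simp add: subseteq_mset_def)
    then have "{#g, g#} = A"
      using atom_eq_if_zero_sum_submset[OF atom] vec_2_add_self[of g] by simp
    moreover have "g \<in># A" using \<open>2 \<le> count A g\<close> by (metis count_eq_zero_iff not_numeral_le_zero)
    ultimately show ?thesis using that(2) False by auto
  next
    case False
    then have "count A x < 2" for x by (simp add: not_le)
    then have "count A x \<le> 1" for x by (simp add: less_2_cases_iff le_Suc_eq)
    moreover have "set_mset A \<subseteq> set_mset S_seq" using support \<open>0 \<notin># A\<close> by auto
    ultimately have "A \<in> {{#}, U_seq, R_seq, W_seq}"
      using zero_sum_squarefree_S_seq atom_sum_zero[OF atom] by blast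
    then show ?thesis using that(3-5) atom_not_empty[OF atom] by blast
  qed
qed

lemma U_R_W_distinct [simp]:
  "U_seq \<noteq> R_seq" "U_seq \<noteq> W_seq" "R_seq \<noteq> W_seq" "R_seq \<noteq> U_seq" "W_seq \<noteq> U_seq" "W_seq \<noteq> R_seq"
  by (rule notI, drule arg_cong[of _ _ size], simp)+

lemma count_U_R_W [simp]:
  "count U_seq 0 = 0" "count U_seq e_01 = 0" "count U_seq (e 0) = 1" "count U_seq (e 2) = 1"
  "count R_seq 0 = 0" "count R_seq e_01 = 1" "count R_seq (e 0) = 1" "count R_seq (e 2) = 0"
  "count W_seq 0 = 0" "count W_seq e_01 = 1" "count W_seq (e 0) = 0" "count W_seq (e 2) = 1"
  by (simp_all add: U_seq_def R_seq_def W_seq_def)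

text \<open>These counts vanish modulo 2 on the pairs {#g, g#} and detect U_seq, R_seq and W_seq;
  summed over a factorization they pin down its length.\<close>
lemma atom_over_S_seq_counts:
  assumes "atom A" "set_mset A \<subseteq> insert 0 (set_mset S_seq)"
  shows "count A 0 + size A =
      2 + 4 * of_bool (A = U_seq) + of_bool (A = R_seq) + 3 * of_bool (A = W_seq)"
    and "\<exists>d. count A e_01 = of_bool (A = R_seq) + of_bool (A = W_seq) + 2 * d"
    and "\<exists>d. count A (e 0) = of_bool (A = U_seq) + of_bool (A = R_seq) + 2 * d"
    and "\<exists>d. count A (e 2) = of_bool (A = U_seq) + of_bool (A = W_seq) + 2 * d"
proof -
  have pair: "\<exists>d. count {#g, g#} x = 2 * d" for g x :: "2^5"
    by (rule exI[of _ "count {#g#} x"]) simp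
  have "B \<notin> {U_seq, R_seq, W_seq}" if "size B < 3" for B :: "(2^5) multiset"
    using that by auto
  then have small: "{#0#} \<notin> {U_seq, R_seq, W_seq}" "{#g, g#} \<notin> {U_seq, R_seq, W_seq}" for g
    by simp_all
  note cases = atom_over_S_seq_cases[OF assms]
  show "count A 0 + size A =
      2 + 4 * of_bool (A = U_seq) + of_bool (A = R_seq) + 3 * of_bool (A = W_seq)"
    by (rule cases) (use small in auto)
  show "\<exists>d. count A e_01 = of_bool (A = R_seq) + of_bool (A = W_seq) + 2 * d"
    by (rule cases) (use pair small in auto)
  show "\<exists>d. count A (e 0) = of_bool (A = U_seq) + of_bool (A = R_seq) + 2 * d"
    by (rule cases) (use pair small in auto)
  show "\<exists>d. count A (e 2) = of_bool (A = U_seq) + of_bool (A = W_seq) + 2 * d"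
    by (rule cases) (use pair small in auto)
qed

definition realizing_seq :: "nat \<Rightarrow> nat \<Rightarrow> (2^5) multiset" where
  "realizing_seq z i = replicate_mset z 0 + repeat_mset i {#e 0, e 1#} + {#e_01#} +
     repeat_mset (Suc i) {#e 2, e 3, e 4, e_sum#}"

lemma count_realizing_seq:
  "count (realizing_seq z i) 0 = z" "count (realizing_seq z i) e_01 = 1"
  "count (realizing_seq z i) (e 0) = i" "count (realizing_seq z i) (e 2) = Suc i"
  by (simp_all add: realizing_seq_def)

lemma size_realizing_seq: "size (realizing_seq z i) = z + 6 * i + 5"
  by (simp add: realizing_seq_def)

lemma set_mset_realizing_seq: "set_mset (realizing_seq z i) \<subseteq> insert 0 (set_mset S_seq)"
  by (auto simp: realizing_seq_def S_seq_def)

lemma sum_list_even_offset: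
  fixes f g :: "'a \<Rightarrow> nat"
  assumes "\<And>x. x \<in> set xs \<Longrightarrow> \<exists>d. f x = g x + 2 * d"
  shows "\<exists>d. (\<Sum>x\<leftarrow>xs. f x) = (\<Sum>x\<leftarrow>xs. g x) + 2 * d"
  using assms
proof (induct xs)
  case (Cons x xs)
  then obtain d d' where "f x = g x + 2 * d" "(\<Sum>x\<leftarrow>xs. f x) = (\<Sum>x\<leftarrow>xs. g x) + 2 * d'"
    by (metis list.set_intros)
  then show ?case by (intro exI[of _ "d + d'"]) simp
qed simp

lemma lengths_realizing_seq_constraints:
  assumes "k \<in> lengths (realizing_seq z i)"
  shows "\<exists>u r w d0 d2. r + w = 1 \<and> i = u + r + 2 * d0 \<and> Suc i = u + w + 2 * d2 \<and>
    2 * k + 4 * u + r + 3 * w = 2 * z + 6 * i + 5"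
proof -
  obtain As where As: "length As = k" "\<forall>A\<in>set As. atom A" "sum_list As = realizing_seq z i"
    using assms by (auto simp: lengths_def)
  have atom: "atom A" if "A \<in> set As" for A using As(2) that by blast
  have support: "set_mset A \<subseteq> insert 0 (set_mset S_seq)" if "A \<in> set As" for A
  proof -
    have "set_mset A \<subseteq> set_mset (realizing_seq z i)"
      using set_mset_mono[OF mset_subset_eq_sum_list[OF that]] by (simp add: As(3))
    then show ?thesis using set_mset_realizing_seq by blast
  qed
  note counts = atom_over_S_seq_counts[OF atom support]
  define u r w :: nat where "u = (\<Sum>A\<leftarrow>As. of_bool (A = U_seq))"
    and "r = (\<Sum>A\<leftarrow>As. of_bool (A = R_seq))" and "w = (\<Sum>A\<leftarrow>As. of_bool (A = W_seq))"
  have parity: "\<exists>d. count (realizing_seq z i) x = (\<Sum>A\<leftarrow>As. f A) + 2 * d"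
    if "\<And>A. A \<in> set As \<Longrightarrow> \<exists>d. count A x = f A + 2 * d" for x f
    using sum_list_even_offset[OF that] by (simp add: As(3)[symmetric] count_sum_list)
  obtain d1 where "1 = r + w + 2 * d1"
    using parity[of e_01 "\<lambda>A. of_bool (A = R_seq) + of_bool (A = W_seq)"] counts(2)
    by (auto simp: count_realizing_seq r_def w_def sum_list_addf)
  then have "r + w = 1" by presburger
  moreover obtain d0 where "i = u + r + 2 * d0"
    using parity[of "e 0" "\<lambda>A. of_bool (A = U_seq) + of_bool (A = R_seq)"] counts(3)
    by (auto simp: count_realizing_seq u_def r_def sum_list_addf)
  moreover obtain d2 where "Suc i = u + w + 2 * d2"
    using parity[of "e 2" "\<lambda>A. of_bool (A = U_seq) + of_bool (A = W_seq)"] counts(4)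
    by (auto simp: count_realizing_seq u_def w_def sum_list_addf)
  moreover have "2 * k + 4 * u + r + 3 * w = 2 * z + 6 * i + 5"
  proof -
    have "2 * z + 6 * i + 5 = (\<Sum>A\<leftarrow>As. count A 0 + size A)"
      using count_realizing_seq(1)[of z i] size_realizing_seq[of z i]
      by (simp add: As(3)[symmetric] count_sum_list size_sum_list sum_list_addf)
    also have "\<dots> = (\<Sum>A\<leftarrow>As. 2 + 4 * of_bool (A = U_seq) + of_bool (A = R_seq) +
        3 * of_bool (A = W_seq))"
      using counts(1) by (intro arg_cong[of _ _ sum_list] map_cong) auto
    also have "\<dots> = (\<Sum>A\<leftarrow>As. 2) + 4 * u + r + 3 * w"
      by (simp only: sum_list_addf sum_list_const_mult u_def r_def w_def)
    finally show ?thesis using As(1) by (simp add: sum_list_triv)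
  qed
  ultimately show ?thesis by blast
qed

lemma lengths_realizing_seq_intro:
  assumes "r + w = 1" "i = u + r + 2 * d0" "Suc i = u + w + 2 * d2"
    and "2 * k + 4 * u + r + 3 * w = 2 * z + 6 * i + 5"
  shows "k \<in> lengths (realizing_seq z i)"
proof -
  define X where "X = (if r = 1 then R_seq else W_seq)"
  define As where "As = replicate z {#0#} @ X # replicate u U_seq @
    replicate d0 {#e 0, e 0#} @ replicate d0 {#e 1, e 1#} @ replicate d2 {#e 2, e 2#} @
    replicate d2 {#e 3, e 3#} @ replicate d2 {#e 4, e 4#} @ replicate d2 {#e_sum, e_sum#}"
  have pair: "atom {#g, g#}" if "g \<noteq> 0" for g :: "2^5"
    using atom_pair[OF vec_2_add_self that] .
  have "length As = k" using assms by (simp add: As_def)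
  moreover have "\<forall>A\<in>set As. atom A"
    using atom_U_seq atom_R_seq atom_W_seq atom_singleton_iff[of "0 :: 2^5"] pair
    by (auto simp: As_def X_def)
  moreover have "sum_list As = realizing_seq z i"
  proof (rule multiset_eqI)
    fix x
    consider "x = 0" | "x = e 0" | "x = e 1" | "x = e 2" | "x = e 3" | "x = e 4" | "x = e_sum"
      | "x = e_01" | "x \<notin> insert 0 (set_mset S_seq)"
      by (auto simp: S_seq_def)
    then show "count (sum_list As) x = count (realizing_seq z i) x"
      using assms by cases
        (auto simp: As_def X_def realizing_seq_def count_sum_list sum_list_replicate
          U_seq_def R_seq_def W_seq_def S_seq_def)
  qed
  ultimately show ?thesis unfolding lengths_def by blast
qed

section \<open>Multiprogressions with difference 4 and period {0, 3, 4}\<close>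

definition amp_0_3_4 :: "nat \<Rightarrow> nat \<Rightarrow> nat set" where
  "amp_0_3_4 m M = {x. m \<le> x \<and> x \<le> M \<and> ((x - m) mod 4 = 0 \<or> (x - m) mod 4 = 3)}"

lemma int_residue_0_3_4_iff:
  "(\<exists>y\<in>{0, 3, 4}. \<exists>k. int d = y + 4 * k) \<longleftrightarrow> d mod 4 = 0 \<or> d mod 4 = 3"
proof -
  have "(\<exists>k. int d = 4 * k) \<longleftrightarrow> d mod 4 = 0" "(\<exists>k. int d = 4 + 4 * k) \<longleftrightarrow> d mod 4 = 0"
    "(\<exists>k. int d = 3 + 4 * k) \<longleftrightarrow> d mod 4 = 3"
    by presburger+
  then show ?thesis by auto
qed

lemma is_AMP_imp_eq_amp_0_3_4:
  assumes "is_AMP (int ` L) 4 {0, 3, 4}"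
  shows "L = amp_0_3_4 (Min L) (Max L)"
proof -
  have fin: "finite L" and ne: "L \<noteq> {}"
    and L: "int ` L = {x. \<exists>y\<in>{0, 3, 4}. \<exists>k. x = Min (int ` L) + y + 4 * k} \<inter>
      {Min (int ` L)..Max (int ` L)}"
    using assms by (auto simp: is_AMP_def finite_image_iff)
  have min_max: "Min (int ` L) = int (Min L)" "Max (int ` L) = int (Max L)"
    using fin ne by (simp_all add: mono_Min_commute mono_Max_commute mono_def)
  have shift: "int x = int m + y + 4 * k \<longleftrightarrow> int (x - m) = y + 4 * k" if "m \<le> x" for x m y k
    using that by (simp add: of_nat_diff algebra_simps)
  have "x \<in> L \<longleftrightarrow> int x \<in> int ` L" for x by (simp add: inj_image_mem_iff)
  also have "\<dots> x \<longleftrightarrow> (\<exists>y\<in>{0, 3, 4}. \<exists>k. int x = int (Min L) + y + 4 * k) \<and> Min L \<le> x \<and> x \<le> Max L"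
    for x by (subst L) (simp add: min_max)
  also have "\<dots> x \<longleftrightarrow> x \<in> amp_0_3_4 (Min L) (Max L)" for x
  proof (cases "Min L \<le> x")
    case True
    then show ?thesis by (simp only: shift int_residue_0_3_4_iff) (auto simp: amp_0_3_4_def)
  qed (simp add: amp_0_3_4_def)
  finally show ?thesis by blast
qed

lemma realizing_constraints_iff:
  "(\<exists>u r w d0 d2. r + w = 1 \<and> i = u + r + 2 * d0 \<and> Suc i = u + w + 2 * d2 \<and>
      2 * k + 4 * u + r + 3 * w = 2 * z + 6 * i + 5) \<longleftrightarrow>
   (\<exists>b. 2 * b \<le> i \<and> k = z + i + 1 + 4 * b) \<or> (\<exists>a. 2 * a + 1 \<le> i \<and> k = z + i + 1 + 3 + 4 * a)"
  (is "?constraints \<longleftrightarrow> ?explicit")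
proof
  assume ?constraints
  then obtain u r w d0 d2 where c: "r + w = 1" "i = u + r + 2 * d0" "Suc i = u + w + 2 * d2"
    "2 * k + 4 * u + r + 3 * w = 2 * z + 6 * i + 5" by blast
  then consider "r = 1" "w = 0" | "r = 0" "w = 1" by linarith
  then show ?explicit
  proof cases
    case 1
    then have "2 * d0 + 1 \<le> i \<and> k = z + i + 1 + 3 + 4 * d0" using c by linarith
    then show ?thesis by blast
  next
    case 2
    then have "2 * d0 \<le> i \<and> k = z + i + 1 + 4 * d0" using c by linarith
    then show ?thesis by blast
  qed
next
  assume ?explicit
  then show ?constraints
  proof (elim disjE exE conjE)
    fix b assume "2 * b \<le> i" "k = z + i + 1 + 4 * b"
    then have "0 + 1 = (1::nat) \<and> i = (i - 2 * b) + 0 + 2 * b \<and> Suc i = (i - 2 * b) + 1 + 2 * b \<and>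
      2 * k + 4 * (i - 2 * b) + 0 + 3 * 1 = 2 * z + 6 * i + 5" by linarith
    then show ?constraints by blast
  next
    fix a assume "2 * a + 1 \<le> i" "k = z + i + 1 + 3 + 4 * a"
    then have "1 + 0 = (1::nat) \<and> i = (i - 1 - 2 * a) + 1 + 2 * a \<and>
      Suc i = (i - 1 - 2 * a) + 0 + 2 * (a + 1) \<and>
      2 * k + 4 * (i - 1 - 2 * a) + 1 + 3 * 0 = 2 * z + 6 * i + 5"
      by (simp add: distrib_left; linarith)
    then show ?constraints by blast
  qed
qed

lemma mem_amp_0_3_4_iff:
  "(\<exists>b. 2 * b \<le> i \<and> k = m + 4 * b) \<or> (\<exists>a. 2 * a + 1 \<le> i \<and> k = m + 3 + 4 * a) \<longleftrightarrow>
   k \<in> amp_0_3_4 m (m + 2 * i + of_bool (odd i))"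
proof
  assume "(\<exists>b. 2 * b \<le> i \<and> k = m + 4 * b) \<or> (\<exists>a. 2 * a + 1 \<le> i \<and> k = m + 3 + 4 * a)"
  then show "k \<in> amp_0_3_4 m (m + 2 * i + of_bool (odd i))"
  proof (elim disjE exE conjE)
    fix b assume "2 * b \<le> i" "k = m + 4 * b"
    then show ?thesis by (simp add: amp_0_3_4_def)
  next
    fix a assume a: "2 * a + 1 \<le> i" "k = m + 3 + 4 * a"
    have "4 * a + 3 \<le> 2 * i + of_bool (odd i)"
    proof (cases "odd i")
      case False
      then have "2 * a + 2 \<le> i" using a(1) by presburger
      then show ?thesis by simp
    qed (use a(1) in simp)
    then show ?thesis using a(2) by (simp add: amp_0_3_4_def)
  qed
next
  assume "k \<in> amp_0_3_4 m (m + 2 * i + of_bool (odd i))"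
  then have k: "m \<le> k" "k - m \<le> 2 * i + of_bool (odd i)" "(k - m) mod 4 = 0 \<or> (k - m) mod 4 = 3"
    by (auto simp: amp_0_3_4_def)
  define q where "q = (k - m) div 4"
  have km: "k = m + (k - m) mod 4 + 4 * q" using k(1) unfolding q_def by simp
  have "2 * q \<le> i" and "(k - m) mod 4 = 3 \<Longrightarrow> 2 * q + 1 \<le> i"
    using k(2) km by (cases "odd i"; simp; presburger)+
  then show "(\<exists>b. 2 * b \<le> i \<and> k = m + 4 * b) \<or> (\<exists>a. 2 * a + 1 \<le> i \<and> k = m + 3 + 4 * a)"
    using k(3) km by auto
qed

lemma lengths_realizing_seq:
  "lengths (realizing_seq z i) = amp_0_3_4 (z + i + 1) (z + i + 1 + 2 * i + of_bool (odd i))"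
proof -
  have "k \<in> lengths (realizing_seq z i) \<longleftrightarrow> (\<exists>u r w d0 d2. r + w = 1 \<and> i = u + r + 2 * d0 \<and>
      Suc i = u + w + 2 * d2 \<and> 2 * k + 4 * u + r + 3 * w = 2 * z + 6 * i + 5)" for k
    using lengths_realizing_seq_constraints lengths_realizing_seq_intro by blast
  also have "\<dots> k \<longleftrightarrow> (\<exists>b. 2 * b \<le> i \<and> k = z + i + 1 + 4 * b) \<or>
      (\<exists>a. 2 * a + 1 \<le> i \<and> k = z + i + 1 + 3 + 4 * a)" for k
    by (rule realizing_constraints_iff)
  also have "\<dots> k \<longleftrightarrow> k \<in> amp_0_3_4 (z + i + 1) (z + i + 1 + 2 * i + of_bool (odd i))" for k
    by (rule mem_amp_0_3_4_iff)
  finally show ?thesis by blast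
qed

lemma div_2_of_mod_4:
  fixes d :: nat
  assumes "d mod 4 = 0 \<or> d mod 4 = 3"
  shows "d = 2 * (d div 2) + of_bool (odd (d div 2))"
  using assms by (cases "odd (d div 2)") (simp_all, presburger+)

lemma amp_0_3_4_in_sets_of_lengths_C2_5:
  assumes "m \<le> M" "(M - m) mod 4 = 0 \<or> (M - m) mod 4 = 3" "(M - m) div 2 < m"
  shows "amp_0_3_4 m M \<in> sets_of_lengths (UNIV :: (2^5) set)"
proof -
  define i where "i = (M - m) div 2"
  have "M - m = 2 * i + of_bool (odd i)"
    unfolding i_def using assms(2) by (rule div_2_of_mod_4)
  moreover have "i < m" using assms(3) by (simp add: i_def)
  ultimately have "(m - i - 1) + i + 1 = m" "m + 2 * i + of_bool (odd i) = M"
    using assms(1) by linarith+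
  then have "amp_0_3_4 m M = lengths (realizing_seq (m - i - 1) i)"
    by (simp only: lengths_realizing_seq)
  moreover have "m \<in> amp_0_3_4 m M" using assms(1) by (simp add: amp_0_3_4_def)
  ultimately show ?thesis
    using sum_mset_of_lengths[of m "realizing_seq (m - i - 1) i"]
    unfolding sets_of_lengths_def zero_sum_def by blast
qed

lemma lengths_C6_eq_amp_0_3_4:
  fixes B :: "6 multiset"
  assumes L: "lengths B = amp_0_3_4 m M" and m: "m \<in> lengths B" and M: "M \<in> lengths B"
  shows "M = 0 \<or> (M - m) div 2 < m"
proof (cases "m = 0")
  case True
  then show ?thesis using lengths_C6_le_three_times[OF m M] by simp
next
  case False
  have M_mod: "(M - m) mod 4 = 0 \<or> (M - m) mod 4 = 3" using M by (simp add: L amp_0_3_4_def)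
  have "M \<noteq> 3 * m"
  proof
    assume M3: "M = 3 * m"
    then have "even m" using div_2_of_mod_4[OF M_mod] by simp
    then have "m + 3 \<in> lengths B" using M3 False by (auto simp: L amp_0_3_4_def elim!: evenE)
    then show False using lengths_C6_extremal[OF m] M M3 by blast
  qed
  then have "(M - m) div 2 < m"
    using lengths_C6_le_three_times[OF m M] by (subst div_less_iff_less_mult) linarith+
  then show ?thesis ..
qed

theorem proposition3p5:
  shows "\<forall>L \<in> sets_of_lengths (UNIV :: 6 set).
           is_AMP (int ` L) 4 {0, 3, 4} \<longrightarrow> L \<in> sets_of_lengths (UNIV :: (2 ^ 5) set)"
proof (intro ballI impI)
  fix L assume "L \<in> sets_of_lengths (UNIV :: 6 set)" and amp: "is_AMP (int ` L) 4 {0, 3, 4}"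
  then obtain B :: "6 multiset" where B: "lengths B = L" by (auto simp: sets_of_lengths_def)
  define m M where "m = Min L" and "M = Max L"
  have "finite L" "L \<noteq> {}" using amp by (auto simp: is_AMP_def finite_image_iff)
  then have "m \<in> L" "M \<in> L" by (simp_all add: m_def M_def)
  have L: "L = amp_0_3_4 m M" using is_AMP_imp_eq_amp_0_3_4[OF amp] by (simp add: m_def M_def)
  then have "m \<le> M" "(M - m) mod 4 = 0 \<or> (M - m) mod 4 = 3"
    using \<open>M \<in> L\<close> by (simp_all add: amp_0_3_4_def)
  from lengths_C6_eq_amp_0_3_4 \<open>m \<in> L\<close> \<open>M \<in> L\<close> L B consider "M = 0" | "(M - m) div 2 < m"
    by blast
  then show "L \<in> sets_of_lengths (UNIV :: (2^5) set)"
  proof cases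
    case 1
    then have "L = lengths ({#} :: (2^5) multiset)"
      using L \<open>m \<le> M\<close> by (auto simp: amp_0_3_4_def lengths_empty)
    then show ?thesis unfolding sets_of_lengths_def zero_sum_def by force
  next
    case 2
    then show ?thesis using amp_0_3_4_in_sets_of_lengths_C2_5 \<open>m \<le> M\<close> \<open>(M - m) mod 4 = 0 \<or> _\<close> L
      by simp
  qed
qed

end
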